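(* Consider a controlled Markov chain with finite state space $X$, finite action set $U$, unknown transition probabilities $p$ and rewards $r(x,u)\in(0,1]$, controlled by the RBMLE algorithm described in the context, with parameters $a>0$, $b>2$. Let $\mathcal{G}_1:=\{\omega: p\in\mathcal{C}(t)\ \forall t\in\mathbb{N}\}$. Then on $\mathcal{G}_1$, for every optimal policy $\pi^{\star}\in\Pi^{\star}(p)$, \[ I_k(\pi^{\star})\ge\alpha(\tau_k)(1-\gamma)J^{\star}(p)\quad\forall k=1,2,\dots,K, \] where $\gamma:=\frac{|X|^3|U|}{2a\,p_{\min}J^{\star}(p)}$ and $K$ is the number of episodes considered.
   Context: $\Pi_{sd}$: stationary deterministic policies $X\to U$. $J(\theta,\pi)$: long-term average reward under transition kernel $\theta$ and policy $\pi$; $J^{\star}(\theta)=\max_{\pi\in\Pi_{sd}}J(\theta,\pi)$; $\Pi^{\star}(p)=\arg\max_{\pi\in\Pi_{sd}}J(p,\pi)$. Known information: the zero pattern of $p$ and $p_{\min}:=\min_{(x,y,u):p(x,y,u)>0}p(x,y,u)$. $\Theta$: all $\theta\in[0,1]^{|X|\times|X|\times|U|}$ with $\theta(x,y,u)=0$ whenever $p(x,y,u)=0$ and $\sum_y\theta(x,y,u)=1$; $\theta(x,u)=\{\theta(x,y,u)\}_y$. $KL(p_1,p_2)=\sum_xp_1(x)\log\frac{p_1(x)}{p_2(x)}$. $n(x,u;t)$: number of times action $u$ was applied in state $x$ up to time $t$; $n(x,y,u;t)$: number of those followed by a move to $y$; $\hat p(x,y,u;t)=\frac{n(x,y,u;t)}{n(x,u;t)\vee1}$.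 $d_1(x,u;t)=\sqrt{\log(t^b|X|^2|U|)/n(x,u;t)}$ and $\mathcal{C}(t)=\{\theta\in\Theta:|\theta(x,y,u)-\hat p(x,y,u;t)|\le d_1(x,u;t)\ \forall(x,y,u)\}$. Episodes $\mathcal{E}_k=[\tau_k,\tau_{k+1}-1]$, $|\mathcal{E}_k|=2^k$; $n_k=n(\cdot;\tau_k)$, $\hat p_k=\hat p(\tau_k)$; $\alpha(t)=a\log(t^b|X|^2|U|)$. Index: $I_k(\pi)=\max_{\theta\in\Theta}\{\alpha(\tau_k)J(\theta,\pi)-\sum_{(x,u)}n_k(x,u)KL(\hat p_k(x,u),\theta(x,u))\}$; RBMLE applies $\pi_k\in\arg\max_{\pi\in\Pi_{sd}}I_k(\pi)$ during episode $k$. *)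

theory Defs
  imports Complex_Main
begin

text \<open>A transition kernel theta is a function theta x y u = probability of moving from x to y
  under action u. Policies in Pi_sd are functions 'x => 'u.\<close>

fun mdist :: "('x::finite \<Rightarrow> 'x \<Rightarrow> 'u \<Rightarrow> real) \<Rightarrow> ('x \<Rightarrow> 'u) \<Rightarrow> 'x \<Rightarrow> nat \<Rightarrow> 'x \<Rightarrow> real" where
  "mdist \<theta> \<pi> x0 0 y = (if y = x0 then 1 else 0)"
| "mdist \<theta> \<pi> x0 (Suc t) y = (\<Sum>z\<in>UNIV. mdist \<theta> \<pi> x0 t z * \<theta> z y (\<pi> z))"

text \<open>Long-term average reward J(theta, pi) from initial state x0 (Cesaro limit, which
  exists for finite chains).\<close>
definition avg_reward :: "('x::finite \<Rightarrow> 'u \<Rightarrow> real) \<Rightarrow> ('x \<Rightarrow> 'x \<Rightarrow> 'u \<Rightarrow> real) \<Rightarrow> ('x \<Rightarrow> 'u) \<Rightarrow> 'x \<Rightarrow> real" where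
  "avg_reward r \<theta> \<pi> x0 =
     lim (\<lambda>T. (\<Sum>t<T. \<Sum>y\<in>UNIV. mdist \<theta> \<pi> x0 t y * r y (\<pi> y)) / real T)"

definition opt_gain :: "('x::finite \<Rightarrow> 'u::finite \<Rightarrow> real) \<Rightarrow> ('x \<Rightarrow> 'x \<Rightarrow> 'u \<Rightarrow> real) \<Rightarrow> 'x \<Rightarrow> real" where
  "opt_gain r \<theta> x0 = Max ((\<lambda>\<pi>. avg_reward r \<theta> \<pi> x0) ` UNIV)"

definition opt_policies :: "('x::finite \<Rightarrow> 'u::finite \<Rightarrow> real) \<Rightarrow> ('x \<Rightarrow> 'x \<Rightarrow> 'u \<Rightarrow> real) \<Rightarrow> 'x \<Rightarrow> ('x \<Rightarrow> 'u) set" where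
  "opt_policies r \<theta> x0 = {\<pi>. avg_reward r \<theta> \<pi> x0 = opt_gain r \<theta> x0}"

definition pmin :: "('x \<Rightarrow> 'x \<Rightarrow> 'u \<Rightarrow> real) \<Rightarrow> real" where
  "pmin p = Min {p x y u | x y u. p x y u > 0}"

text \<open>Theta: kernels with the (known) zero pattern of p.\<close>
definition Theta :: "('x::finite \<Rightarrow> 'x \<Rightarrow> 'u \<Rightarrow> real) \<Rightarrow> ('x \<Rightarrow> 'x \<Rightarrow> 'u \<Rightarrow> real) set" where
  "Theta p = {\<theta>. (\<forall>x y u. 0 \<le> \<theta> x y u \<and> \<theta> x y u \<le> 1 \<and> (p x y u = 0 \<longrightarrow> \<theta> x y u = 0))
                 \<and> (\<forall>x u. (\<Sum>y\<in>UNIV. \<theta> x y u) = 1)}"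

definition is_kernel :: "('x::finite \<Rightarrow> 'x \<Rightarrow> 'u \<Rightarrow> real) \<Rightarrow> bool" where
  "is_kernel p \<longleftrightarrow> (\<forall>x y u. 0 \<le> p x y u) \<and> (\<forall>x u. (\<Sum>y\<in>UNIV. p x y u) = 1)"

definition KL :: "('x::finite \<Rightarrow> real) \<Rightarrow> ('x \<Rightarrow> real) \<Rightarrow> real" where
  "KL q1 q2 = (\<Sum>y\<in>UNIV. q1 y * ln (q1 y / q2 y))"

text \<open>Counts along a trajectory (time starts at 1): n(x,u;t) counts times s with 1 <= s < t,
  i.e. the transitions observed before time t.\<close>
definition cnt :: "(nat \<Rightarrow> 'x) \<Rightarrow> (nat \<Rightarrow> 'u) \<Rightarrow> 'x \<Rightarrow> 'u \<Rightarrow> nat \<Rightarrow> nat" where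
  "cnt xs us x u t = card {s \<in> {1..<t}. xs s = x \<and> us s = u}"

definition cnt3 :: "(nat \<Rightarrow> 'x) \<Rightarrow> (nat \<Rightarrow> 'u) \<Rightarrow> 'x \<Rightarrow> 'x \<Rightarrow> 'u \<Rightarrow> nat \<Rightarrow> nat" where
  "cnt3 xs us x y u t = card {s \<in> {1..<t}. xs s = x \<and> us s = u \<and> xs (Suc s) = y}"

definition phat :: "(nat \<Rightarrow> 'x) \<Rightarrow> (nat \<Rightarrow> 'u) \<Rightarrow> 'x \<Rightarrow> 'x \<Rightarrow> 'u \<Rightarrow> nat \<Rightarrow> real" where
  "phat xs us x y u t = real (cnt3 xs us x y u t) / real (max (cnt xs us x u t) 1)"

text \<open>Confidence set C(t); when n(x,u;t) = 0 the radius d_1 is infinite (no constraint).\<close>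
definition conf_set :: "real \<Rightarrow> ('x::finite \<Rightarrow> 'x \<Rightarrow> 'u::finite \<Rightarrow> real) \<Rightarrow> (nat \<Rightarrow> 'x) \<Rightarrow> (nat \<Rightarrow> 'u) \<Rightarrow> nat
     \<Rightarrow> ('x \<Rightarrow> 'x \<Rightarrow> 'u \<Rightarrow> real) set" where
  "conf_set b p xs us t = {\<theta> \<in> Theta p. \<forall>x y u. cnt xs us x u t > 0 \<longrightarrow>
      \<bar>\<theta> x y u - phat xs us x y u t\<bar>
        \<le> sqrt (ln (real t powr b * real (card (UNIV :: 'x set))^2 * real (card (UNIV :: 'u set))) / real (cnt xs us x u t))}"

text \<open>Episode start times: tau_1 = 1, |E_k| = 2^k, so tau_k = 2^k - 1.\<close>
definition tau :: "nat \<Rightarrow> nat" where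
  "tau k = 2^k - 1"

definition alpha :: "real \<Rightarrow> real \<Rightarrow> nat \<Rightarrow> nat \<Rightarrow> nat \<Rightarrow> real" where
  "alpha a b nX nU t = a * ln (real t powr b * real nX ^ 2 * real nU)"

text \<open>The maximum over Theta is rendered as a supremum over those theta
  for which every KL term is finite (theta > 0 wherever the empirical estimate is positive);
  kernels with an infinite KL term give value -infinity and do not affect the maximum.\<close>
definition rb_index :: "('x::finite \<Rightarrow> 'u::finite \<Rightarrow> real) \<Rightarrow> ('x \<Rightarrow> 'x \<Rightarrow> 'u \<Rightarrow> real)
     \<Rightarrow> (nat \<Rightarrow> 'x) \<Rightarrow> (nat \<Rightarrow> 'u) \<Rightarrow> real \<Rightarrow> real \<Rightarrow> nat \<Rightarrow> ('x \<Rightarrow> 'u) \<Rightarrow> real" where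
  "rb_index r p xs us a b k \<pi> =
     Sup {alpha a b (card (UNIV :: 'x set)) (card (UNIV :: 'u set)) (tau k) * avg_reward r \<theta> \<pi> (xs 1)
          - (\<Sum>x\<in>UNIV. \<Sum>u\<in>UNIV. real (cnt xs us x u (tau k))
               * KL (\<lambda>y. phat xs us x y u (tau k)) (\<lambda>y. \<theta> x y u))
         | \<theta>. \<theta> \<in> Theta p \<and> (\<forall>x y u. phat xs us x y u (tau k) > 0 \<longrightarrow> \<theta> x y u > 0)}"

text \<open>Sample paths of the RBMLE algorithm: every observed transition has positive probability,
  and during episode k the action is pi_k(x_t) with pi_k maximizing I_k.\<close>
definition rbmle_path :: "('x::finite \<Rightarrow> 'u::finite \<Rightarrow> real) \<Rightarrow> ('x \<Rightarrow> 'x \<Rightarrow> 'u \<Rightarrow> real)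
     \<Rightarrow> real \<Rightarrow> real \<Rightarrow> (nat \<Rightarrow> 'x) \<Rightarrow> (nat \<Rightarrow> 'u) \<Rightarrow> bool" where
  "rbmle_path r p a b xs us \<longleftrightarrow>
     (\<forall>t\<ge>1. p (xs t) (xs (Suc t)) (us t) > 0) \<and>
     (\<exists>pol :: nat \<Rightarrow> 'x \<Rightarrow> 'u. \<forall>k\<ge>1.
        (\<forall>\<pi>. rb_index r p xs us a b k \<pi> \<le> rb_index r p xs us a b k (pol k)) \<and>
        (\<forall>t\<in>{tau k..<tau (Suc k)}. us t = pol k (xs t)))"

end

theory Submission
  imports Defs "HOL-Analysis.Analysis"
begin

text \<open>Choosing \<open>\<theta> = p\<close> in the maximisation defining \<open>I\<^sub>k\<close> gives
  \<open>I\<^sub>k(\<pi>\<^sup>\<star>) \<ge> \<alpha>(\<tau>\<^sub>k) J\<^sup>\<star>(p) - \<Sum> n\<^sub>k(x,u) KL(phat\<^sub>k(x,u), p(x,u))\<close>. On \<open>\<G>\<^sub>1\<close> every entry of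
  the empirical estimate is within \<open>d = sqrt (log(\<tau>\<^sub>k\<^sup>b |X|\<^sup>2 |U|) / n\<^sub>k(x,u))\<close> of \<open>p\<close>, and KL is
  dominated by the chi-square distance \<open>\<Sum>\<^sub>y (phat\<^sub>k - p)\<^sup>2 / p \<le> |X| d\<^sup>2 / p\<^sub>m\<^sub>i\<^sub>n\<close>; hence every pair
  \<open>(x,u)\<close> costs at most \<open>|X|\<^sup>2 log(\<dots>) / (2 p\<^sub>m\<^sub>i\<^sub>n)\<close>, and the \<open>|X||U|\<close> pairs together cost
  exactly \<open>\<alpha>(\<tau>\<^sub>k) \<gamma> J\<^sup>\<star>(p)\<close>.

  The index is a supremum over all kernels of values involving the average reward, which is
  defined as a limit; bounding it below by one of these values needs the set to be bounded
  above, i.e. that the Cesaro averages of the powers of a stochastic matrix \<open>P\<close> converge. Any two limit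
  points satisfy \<open>Q\<^sub>1 P = Q\<^sub>1\<close> and \<open>P Q\<^sub>2 = Q\<^sub>2\<close>, so \<open>Q\<^sub>1 = Q\<^sub>1 Q\<^sub>2 = Q\<^sub>2\<close>, and compactness does
  the rest.\<close>

section \<open>Products and powers of square matrices\<close>

text \<open>Matrices are plain functions, like the kernels of the model; \<open>real^'n^'n\<close> has no
  matrix power.\<close>

definition mat_mult :: "('n::finite \<Rightarrow> 'n \<Rightarrow> real) \<Rightarrow> ('n \<Rightarrow> 'n \<Rightarrow> real) \<Rightarrow> 'n \<Rightarrow> 'n \<Rightarrow> real" where
  "mat_mult A B i j = (\<Sum>k\<in>UNIV. A i k * B k j)"

definition mat_one :: "'n \<Rightarrow> 'n \<Rightarrow> real" where
  "mat_one i j = (if i = j then 1 else 0)"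

fun mat_pow :: "('n::finite \<Rightarrow> 'n \<Rightarrow> real) \<Rightarrow> nat \<Rightarrow> 'n \<Rightarrow> 'n \<Rightarrow> real" where
  "mat_pow P 0 = mat_one"
| "mat_pow P (Suc t) = mat_mult (mat_pow P t) P"

definition cesaro_mean :: "('n::finite \<Rightarrow> 'n \<Rightarrow> real) \<Rightarrow> nat \<Rightarrow> 'n \<Rightarrow> 'n \<Rightarrow> real" where
  "cesaro_mean P T i j = (\<Sum>t<T. mat_pow P t i j) / real T"

lemma mat_mult_assoc: "mat_mult (mat_mult A B) C = mat_mult A (mat_mult B C)"
  by (auto simp: mat_mult_def fun_eq_iff sum_distrib_left sum_distrib_right mult.assoc
      intro: sum.swap)

lemma mat_mult_one_left [simp]: "mat_mult mat_one A = A"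
  by (simp add: mat_mult_def mat_one_def fun_eq_iff if_distrib[where f = "\<lambda>c. c * _"] cong: if_cong)

lemma mat_mult_one_right [simp]: "mat_mult A mat_one = A"
  by (simp add: mat_mult_def mat_one_def fun_eq_iff if_distrib[where f = "\<lambda>c. _ * c"] cong: if_cong)

lemma mat_pow_Suc_left: "mat_pow P (Suc t) = mat_mult P (mat_pow P t)"
  by (induction t) (simp_all add: mat_mult_assoc)

lemma mat_mult_cesaro_mean_left:
  "mat_mult (cesaro_mean P T) B i j = (\<Sum>t<T. mat_mult (mat_pow P t) B i j) / real T"
  by (simp add: cesaro_mean_def mat_mult_def sum_divide_distrib sum_distrib_right) (rule sum.swap)

lemma mat_mult_cesaro_mean_right:
  "mat_mult B (cesaro_mean P T) i j = (\<Sum>t<T. mat_mult B (mat_pow P t) i j) / real T"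
  by (simp add: cesaro_mean_def mat_mult_def sum_divide_distrib sum_distrib_left mult.left_commute)
    (rule sum.swap)

lemma sum_mat_pow_Suc_diff:
  "(\<Sum>t<T. mat_pow P (Suc t) i j) - (\<Sum>t<T. mat_pow P t i j) = mat_pow P T i j - mat_one i j"
  by (simp only: sum_subtractf[symmetric] sum_lessThan_telescope[of "\<lambda>t. mat_pow P t i j"]
      mat_pow.simps(1))

lemma cesaro_mean_mult_right_diff:
  "mat_mult (cesaro_mean P T) P i j - cesaro_mean P T i j = (mat_pow P T i j - mat_one i j) / real T"
  by (simp add: mat_mult_cesaro_mean_left cesaro_mean_def diff_divide_distrib
      flip: sum_mat_pow_Suc_diff)

lemma cesaro_mean_mult_left_diff:
  "mat_mult P (cesaro_mean P T) i j - cesaro_mean P T i j = (mat_pow P T i j - mat_one i j) / real T"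
  by (simp add: mat_mult_cesaro_mean_right cesaro_mean_def diff_divide_distrib
      flip: sum_mat_pow_Suc_diff mat_pow_Suc_left)

lemma mat_mult_cesaro_mean_invariant_right:
  assumes "mat_mult Q P = Q" and "T > 0"
  shows "mat_mult Q (cesaro_mean P T) = Q"
proof -
  have "mat_mult Q (mat_pow P t) = Q" for t
    by (induction t) (simp_all add: assms(1) flip: mat_mult_assoc)
  then show ?thesis
    using assms(2) by (simp add: fun_eq_iff mat_mult_cesaro_mean_right)
qed

lemma mat_mult_cesaro_mean_invariant_left:
  assumes "mat_mult P Q = Q" and "T > 0"
  shows "mat_mult (cesaro_mean P T) Q = Q"
proof -
  have "mat_mult (mat_pow P t) Q = Q" for t
    by (induction t) (simp_all add: assms(1) mat_pow_Suc_left mat_mult_assoc del: mat_pow.simps(2))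
  then show ?thesis
    using assms(2) by (simp add: fun_eq_iff mat_mult_cesaro_mean_left)
qed

lemma tendsto_mat_mult_left:
  "(\<And>i j. (\<lambda>n. X n i j) \<longlonglongrightarrow> Q i j) \<Longrightarrow> (\<lambda>n. mat_mult (X n) B i j) \<longlonglongrightarrow> mat_mult Q B i j"
  unfolding mat_mult_def by (intro tendsto_intros)

lemma tendsto_mat_mult_right:
  "(\<And>i j. (\<lambda>n. X n i j) \<longlonglongrightarrow> Q i j) \<Longrightarrow> (\<lambda>n. mat_mult B (X n) i j) \<longlonglongrightarrow> mat_mult B Q i j"
  unfolding mat_mult_def by (intro tendsto_intros)

section \<open>Cesaro means of a stochastic matrix\<close>

lemma LIMSEQ_if_subseqs_LIMSEQ:
  fixes X :: "nat \<Rightarrow> 'a::metric_space"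
  assumes "\<And>h :: nat \<Rightarrow> nat. strict_mono h \<Longrightarrow> \<exists>r. strict_mono r \<and> (X \<circ> h \<circ> r) \<longlonglongrightarrow> L"
  shows "X \<longlonglongrightarrow> L"
proof (rule ccontr)
  assume "\<not> X \<longlonglongrightarrow> L"
  then obtain e where "e > 0" and "\<not> (\<forall>\<^sub>F n in sequentially. dist (X n) L < e)"
    unfolding tendsto_iff by blast
  then have bad: "infinite {n. e \<le> dist (X n) L}"
    by (simp add: not_eventually frequently_cofinite not_less flip: cofinite_eq_sequentially)
  define h where "h = enumerate {n. e \<le> dist (X n) L}"
  have "strict_mono h"
    unfolding h_def by (rule strict_mono_enumerate[OF bad])
  then obtain r where lim: "(X \<circ> h \<circ> r) \<longlonglongrightarrow> L"
    using assms by blast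
  have "e \<le> dist L L"
  proof (rule LIMSEQ_le_const)
    show "(\<lambda>n. dist ((X \<circ> h \<circ> r) n) L) \<longlonglongrightarrow> dist L L"
      by (intro tendsto_intros lim)
    show "\<exists>N. \<forall>n\<ge>N. e \<le> dist ((X \<circ> h \<circ> r) n) L"
      using enumerate_in_set[OF bad] by (auto simp: h_def)
  qed
  with \<open>e > 0\<close> show False by simp
qed

locale stochastic_matrix =
  fixes P :: "'n::finite \<Rightarrow> 'n \<Rightarrow> real"
  assumes nonneg: "\<And>i j. 0 \<le> P i j"
    and row_sum: "\<And>i. (\<Sum>j\<in>UNIV. P i j) = 1"
begin

lemma mat_pow_nonneg: "0 \<le> mat_pow P t i j"
  by (induction t arbitrary: j) (auto simp: mat_mult_def mat_one_def nonneg intro!: sum_nonneg)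

lemma mat_pow_row_sum: "(\<Sum>j\<in>UNIV. mat_pow P t i j) = 1"
proof (induction t)
  case 0
  then show ?case by (simp add: mat_one_def)
next
  case (Suc t)
  have "(\<Sum>j\<in>UNIV. mat_pow P (Suc t) i j) = (\<Sum>k\<in>UNIV. mat_pow P t i k * (\<Sum>j\<in>UNIV. P k j))"
    by (simp add: mat_mult_def sum_distrib_left) (rule sum.swap)
  with Suc show ?case by (simp add: row_sum)
qed

lemma mat_pow_le_one: "mat_pow P t i j \<le> 1"
proof -
  have "mat_pow P t i j \<le> (\<Sum>j\<in>UNIV. mat_pow P t i j)"
    by (rule member_le_sum) (auto simp: mat_pow_nonneg)
  then show ?thesis by (simp add: mat_pow_row_sum)
qed

lemma cesaro_mean_nonneg: "0 \<le> cesaro_mean P T i j"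
  by (simp add: cesaro_mean_def mat_pow_nonneg sum_nonneg)

lemma cesaro_mean_le_one: "cesaro_mean P T i j \<le> 1"
proof -
  have "(\<Sum>t<T. mat_pow P t i j) \<le> (\<Sum>t<T. 1)"
    by (rule sum_mono) (rule mat_pow_le_one)
  then show ?thesis by (cases "T = 0") (simp_all add: cesaro_mean_def divide_le_eq_1)
qed

lemma mat_pow_minus_one_div_tendsto_0: "(\<lambda>T. (mat_pow P T i j - mat_one i j) / real T) \<longlonglongrightarrow> 0"
proof (rule Lim_null_comparison)
  show "\<forall>\<^sub>F T in sequentially. norm ((mat_pow P T i j - mat_one i j) / real T) \<le> 2 / real T"
  proof (intro always_eventually allI)
    fix T
    have "\<bar>mat_pow P T i j - mat_one i j\<bar> \<le> 2"
      using mat_pow_nonneg[of T i j] mat_pow_le_one[of T i j] by (auto simp: mat_one_def)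
    then show "norm ((mat_pow P T i j - mat_one i j) / real T) \<le> 2 / real T"
      by (simp add: divide_right_mono)
  qed
qed (rule lim_const_over_n)

lemma cesaro_limit_invariant:
  assumes "strict_mono f" and lim: "\<And>i j. (\<lambda>n. cesaro_mean P (f n) i j) \<longlonglongrightarrow> Q i j"
  shows "mat_mult Q P = Q" and "mat_mult P Q = Q"
proof -
  have drift: "(\<lambda>n. (mat_pow P (f n) i j - mat_one i j) / real (f n)) \<longlonglongrightarrow> 0" for i j
    using LIMSEQ_subseq_LIMSEQ[OF mat_pow_minus_one_div_tendsto_0 assms(1)] by (simp add: o_def)
  have "(\<lambda>n. mat_mult (cesaro_mean P (f n)) P i j - cesaro_mean P (f n) i j)
          \<longlonglongrightarrow> mat_mult Q P i j - Q i j" for i j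
    by (intro tendsto_diff tendsto_mat_mult_left lim)
  then have "(\<lambda>n. (mat_pow P (f n) i j - mat_one i j) / real (f n)) \<longlonglongrightarrow> mat_mult Q P i j - Q i j" for i j
    by (simp add: cesaro_mean_mult_right_diff)
  from LIMSEQ_unique[OF this drift] show "mat_mult Q P = Q"
    by (simp add: fun_eq_iff)
  have "(\<lambda>n. mat_mult P (cesaro_mean P (f n)) i j - cesaro_mean P (f n) i j)
          \<longlonglongrightarrow> mat_mult P Q i j - Q i j" for i j
    by (intro tendsto_diff tendsto_mat_mult_right lim)
  then have "(\<lambda>n. (mat_pow P (f n) i j - mat_one i j) / real (f n)) \<longlonglongrightarrow> mat_mult P Q i j - Q i j" for i j
    by (simp add: cesaro_mean_mult_left_diff)
  from LIMSEQ_unique[OF this drift] show "mat_mult P Q = Q"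
    by (simp add: fun_eq_iff)
qed

lemma cesaro_limit_unique:
  assumes f: "strict_mono f" and lim_f: "\<And>i j. (\<lambda>n. cesaro_mean P (f n) i j) \<longlonglongrightarrow> Q1 i j"
    and g: "strict_mono g" and lim_g: "\<And>i j. (\<lambda>n. cesaro_mean P (g n) i j) \<longlonglongrightarrow> Q2 i j"
  shows "Q1 = Q2"
proof -
  have pos: "\<forall>\<^sub>F n in sequentially. 0 < h n" if h: "strict_mono h" for h :: "nat \<Rightarrow> nat"
  proof (rule eventually_sequentiallyI)
    fix n :: nat
    assume "1 \<le> n"
    with seq_suble[OF h, of n] show "0 < h n" by simp
  qed
  have "\<forall>\<^sub>F n in sequentially. mat_mult Q1 (cesaro_mean P (g n)) i j = Q1 i j" for i j
    using pos[OF g] by eventually_elim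
      (simp add: mat_mult_cesaro_mean_invariant_right[OF cesaro_limit_invariant(1)[OF f lim_f]])
  then have "(\<lambda>n. mat_mult Q1 (cesaro_mean P (g n)) i j) \<longlonglongrightarrow> Q1 i j" for i j
    by (rule tendsto_eventually)
  from LIMSEQ_unique[OF tendsto_mat_mult_right[where X = "\<lambda>n. cesaro_mean P (g n)", OF lim_g] this] have Q1: "mat_mult Q1 Q2 = Q1"
    by (simp add: fun_eq_iff)
  have "\<forall>\<^sub>F n in sequentially. mat_mult (cesaro_mean P (f n)) Q2 i j = Q2 i j" for i j
    using pos[OF f] by eventually_elim
      (simp add: mat_mult_cesaro_mean_invariant_left[OF cesaro_limit_invariant(2)[OF g lim_g]])
  then have "(\<lambda>n. mat_mult (cesaro_mean P (f n)) Q2 i j) \<longlonglongrightarrow> Q2 i j" for i j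
    by (rule tendsto_eventually)
  from LIMSEQ_unique[OF tendsto_mat_mult_left[where X = "\<lambda>n. cesaro_mean P (f n)", OF lim_f] this] have Q2: "mat_mult Q1 Q2 = Q2"
    by (simp add: fun_eq_iff)
  from Q1 Q2 show ?thesis by simp
qed

lemma cesaro_mean_convergent_subseq:
  fixes h :: "nat \<Rightarrow> nat"
  shows "\<exists>r Q. strict_mono r \<and> (\<forall>i j. (\<lambda>n. cesaro_mean P (h (r n)) i j) \<longlonglongrightarrow> Q i j)"
proof -
  define V :: "nat \<Rightarrow> real ^ ('n \<times> 'n)"
    where "V n = (\<chi> ij. cesaro_mean P (h n) (fst ij) (snd ij))" for n
  have "norm (V n) \<le> real CARD('n \<times> 'n)" for n
  proof -
    have "norm (V n) \<le> (\<Sum>ij\<in>UNIV. \<bar>V n $ ij\<bar>)"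
      by (rule norm_le_l1_cart)
    also have "\<dots> \<le> (\<Sum>ij\<in>(UNIV :: ('n \<times> 'n) set). 1)"
      by (intro sum_mono) (simp add: V_def cesaro_mean_nonneg cesaro_mean_le_one)
    finally show ?thesis by simp
  qed
  then have "bounded (range V)"
    by (auto simp: bounded_iff)
  then obtain l r where "strict_mono r" and "(V \<circ> r) \<longlonglongrightarrow> l"
    using bounded_imp_convergent_subsequence by blast
  then have "(\<lambda>n. cesaro_mean P (h (r n)) i j) \<longlonglongrightarrow> l $ (i, j)" for i j
    using tendsto_vec_nth[of "V \<circ> r" l _ "(i, j)"] by (simp add: V_def o_def)
  with \<open>strict_mono r\<close> show ?thesis
    by (intro exI[of _ r] exI[of _ "\<lambda>i j. l $ (i, j)"]) simp
qed

theorem cesaro_mean_tendsto: "\<exists>Q. \<forall>i j. (\<lambda>T. cesaro_mean P T i j) \<longlonglongrightarrow> Q i j"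
proof -
  obtain r0 Q where r0: "strict_mono r0" and Q: "\<And>i j. (\<lambda>n. cesaro_mean P (r0 n) i j) \<longlonglongrightarrow> Q i j"
    using cesaro_mean_convergent_subseq[of id] by auto
  have "(\<lambda>T. cesaro_mean P T i j) \<longlonglongrightarrow> Q i j" for i j
  proof (rule LIMSEQ_if_subseqs_LIMSEQ)
    fix h :: "nat \<Rightarrow> nat"
    assume h: "strict_mono h"
    obtain r Q' where r: "strict_mono r" and Q': "\<And>i j. (\<lambda>n. cesaro_mean P (h (r n)) i j) \<longlonglongrightarrow> Q' i j"
      using cesaro_mean_convergent_subseq[of h] by blast
    have "Q' = Q"
      using cesaro_limit_unique[of "h \<circ> r" Q' r0 Q] strict_mono_o[OF h r] Q' r0 Q by simp
    with r Q' show "\<exists>r. strict_mono r \<and> ((\<lambda>T. cesaro_mean P T i j) \<circ> h \<circ> r) \<longlonglongrightarrow> Q i j"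
      by (auto simp: o_def)
  qed
  then show ?thesis by blast
qed

end

section \<open>Transition kernels and long-run average reward\<close>

lemma is_kernel_le_one:
  assumes "is_kernel \<theta>"
  shows "\<theta> x y u \<le> 1"
proof -
  have "\<theta> x y u \<le> (\<Sum>y\<in>UNIV. \<theta> x y u)"
    using assms by (intro member_le_sum) (auto simp: is_kernel_def)
  with assms show ?thesis by (simp add: is_kernel_def)
qed

lemma Theta_is_kernel: "\<theta> \<in> Theta p \<Longrightarrow> is_kernel \<theta>"
  by (simp add: Theta_def is_kernel_def)

lemma is_kernel_in_Theta: "is_kernel p \<Longrightarrow> p \<in> Theta p"
  by (auto simp: Theta_def is_kernel_def is_kernel_le_one)

lemma finite_positive_entries:
  fixes p :: "'x::finite \<Rightarrow> 'x \<Rightarrow> 'u::finite \<Rightarrow> real"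
  shows "finite {p x y u | x y u. 0 < p x y u}"
proof (rule finite_subset)
  show "{p x y u | x y u. 0 < p x y u} \<subseteq> range (\<lambda>(x, y, u). p x y u)"
    by (auto intro: rev_image_eqI[of "(_, _, _)"])
qed simp

lemma pmin_le:
  fixes p :: "'x::finite \<Rightarrow> 'x \<Rightarrow> 'u::finite \<Rightarrow> real"
  assumes "0 < p x y u"
  shows "pmin p \<le> p x y u"
  unfolding pmin_def using assms by (intro Min_le finite_positive_entries) auto

lemma pmin_pos:
  fixes p :: "'x::finite \<Rightarrow> 'x \<Rightarrow> 'u::finite \<Rightarrow> real"
  assumes "is_kernel p"
  shows "0 < pmin p"
proof -
  fix x :: 'x and u :: 'u
  have "(\<Sum>y\<in>UNIV. p x y u) \<noteq> 0"
    using assms by (simp add: is_kernel_def)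
  then obtain y where "p x y u \<noteq> 0"
    by (meson sum.not_neutral_contains_not_neutral)
  moreover have "0 \<le> p x y u"
    using assms by (simp add: is_kernel_def)
  ultimately have "{p x y u | x y u. 0 < p x y u} \<noteq> {}"
    by (metis (mono_tags, lifting) empty_Collect_eq order_le_less)
  then show ?thesis
    unfolding pmin_def by (auto simp: Min_gr_iff[OF finite_positive_entries])
qed

lemma stochastic_matrix_policy:
  "is_kernel \<theta> \<Longrightarrow> stochastic_matrix (\<lambda>x y. \<theta> x y (\<pi> x))"
  by unfold_locales (simp_all add: is_kernel_def)

lemma mdist_eq_mat_pow: "Defs.mdist \<theta> \<pi> x0 t y = mat_pow (\<lambda>x y. \<theta> x y (\<pi> x)) t x0 y"
  by (induction t arbitrary: y) (auto simp: mat_mult_def mat_one_def)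

lemma avg_reward_tendsto:
  assumes "is_kernel \<theta>"
  shows "(\<lambda>T. (\<Sum>t<T. \<Sum>y\<in>UNIV. Defs.mdist \<theta> \<pi> x0 t y * r y (\<pi> y)) / real T)
           \<longlonglongrightarrow> avg_reward r \<theta> \<pi> x0"
proof -
  let ?P = "\<lambda>x y. \<theta> x y (\<pi> x)"
  interpret stochastic_matrix ?P
    using assms by (rule stochastic_matrix_policy)
  obtain Q where "\<And>i j. (\<lambda>T. cesaro_mean ?P T i j) \<longlonglongrightarrow> Q i j"
    using cesaro_mean_tendsto by blast
  then have "(\<lambda>T. \<Sum>y\<in>UNIV. cesaro_mean ?P T x0 y * r y (\<pi> y)) \<longlonglongrightarrow> (\<Sum>y\<in>UNIV. Q x0 y * r y (\<pi> y))"
    by (intro tendsto_intros)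
  moreover have "(\<Sum>y\<in>UNIV. cesaro_mean ?P T x0 y * r y (\<pi> y))
      = (\<Sum>t<T. \<Sum>y\<in>UNIV. Defs.mdist \<theta> \<pi> x0 t y * r y (\<pi> y)) / real T" for T
    by (simp add: cesaro_mean_def mdist_eq_mat_pow sum_divide_distrib sum_distrib_right)
      (rule sum.swap)
  ultimately show ?thesis
    by (simp add: avg_reward_def limI)
qed

lemma avg_reward_bounds:
  assumes "is_kernel \<theta>" and "\<And>x u. c \<le> r x u" and "\<And>x u. r x u \<le> C"
  shows "c \<le> avg_reward r \<theta> \<pi> x0" and "avg_reward r \<theta> \<pi> x0 \<le> C"
proof -
  interpret stochastic_matrix "\<lambda>x y. \<theta> x y (\<pi> x)"
    using assms(1) by (rule stochastic_matrix_policy)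
  define g where "g t = (\<Sum>y\<in>UNIV. Defs.mdist \<theta> \<pi> x0 t y * r y (\<pi> y))" for t
  have "c \<le> g t \<and> g t \<le> C" for t
  proof -
    have "(\<Sum>y\<in>UNIV. Defs.mdist \<theta> \<pi> x0 t y * c) \<le> g t" "g t \<le> (\<Sum>y\<in>UNIV. Defs.mdist \<theta> \<pi> x0 t y * C)"
      unfolding g_def using assms(2,3)
      by (auto intro!: sum_mono mult_left_mono simp: mdist_eq_mat_pow mat_pow_nonneg)
    then show ?thesis
      by (simp add: mdist_eq_mat_pow mat_pow_row_sum flip: sum_distrib_right)
  qed
  then have "real T * c \<le> (\<Sum>t<T. g t) \<and> (\<Sum>t<T. g t) \<le> real T * C" for T
    using sum_mono[of "{..<T}" "\<lambda>_. c" g] sum_mono[of "{..<T}" g "\<lambda>_. C"] by auto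
  then have bounds: "c \<le> (\<Sum>t<T. g t) / real T \<and> (\<Sum>t<T. g t) / real T \<le> C" if "T \<ge> 1" for T
    using that by (simp add: field_simps)
  have lim: "(\<lambda>T. (\<Sum>t<T. g t) / real T) \<longlonglongrightarrow> avg_reward r \<theta> \<pi> x0"
    unfolding g_def using assms(1) by (rule avg_reward_tendsto)
  show "c \<le> avg_reward r \<theta> \<pi> x0"
    using bounds by (intro LIMSEQ_le_const[OF lim]) auto
  show "avg_reward r \<theta> \<pi> x0 \<le> C"
    using bounds by (intro LIMSEQ_le_const2[OF lim]) auto
qed

lemma abs_avg_reward_le:
  assumes "is_kernel \<theta>" and "\<And>x u. \<bar>r x u\<bar> \<le> R"
  shows "\<bar>avg_reward r \<theta> \<pi> x0\<bar> \<le> R"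
proof -
  have "- R \<le> r x u" and "r x u \<le> R" for x u
    using assms(2)[of x u] by auto
  then have "- R \<le> avg_reward r \<theta> \<pi> x0" and "avg_reward r \<theta> \<pi> x0 \<le> R"
    by (rule avg_reward_bounds[OF assms(1)])+
  then show ?thesis by simp
qed

lemma avg_reward_pos:
  fixes r :: "'x::finite \<Rightarrow> 'u::finite \<Rightarrow> real"
  assumes "is_kernel \<theta>" and "\<And>x u. 0 < r x u"
  shows "0 < avg_reward r \<theta> \<pi> x0"
proof -
  let ?c = "Min (range (case_prod r))"
  have "0 < ?c"
    using assms(2) by (subst Min_gr_iff) auto
  moreover have "?c \<le> avg_reward r \<theta> \<pi> x0"
    using assms(1) by (rule avg_reward_bounds(1)[where C = "Max (range (case_prod r))"])
      (auto intro!: Min_le Max_ge rev_image_eqI[of "(_, _)"])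
  ultimately show ?thesis by linarith
qed

lemma sum_cnt3:
  fixes xs :: "nat \<Rightarrow> 'x::finite"
  shows "(\<Sum>y\<in>UNIV. cnt3 xs us x y u t) = cnt xs us x u t"
proof -
  let ?B = "\<lambda>y. {s \<in> {1..<t}. xs s = x \<and> us s = u \<and> xs (Suc s) = y}"
  have "{s \<in> {1..<t}. xs s = x \<and> us s = u} = (\<Union>y\<in>UNIV. ?B y)"
    by auto
  then have "cnt xs us x u t = card (\<Union>y\<in>UNIV. ?B y)"
    by (simp add: cnt_def)
  also have "\<dots> = (\<Sum>y\<in>UNIV. card (?B y))"
    by (rule card_UN_disjoint) auto
  finally show ?thesis by (simp add: cnt3_def)
qed

lemma phat_nonneg: "0 \<le> phat xs us x y u t"
  by (simp add: phat_def)

lemma sum_phat: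
  fixes xs :: "nat \<Rightarrow> 'x::finite"
  assumes "0 < cnt xs us x u t"
  shows "(\<Sum>y\<in>UNIV. phat xs us x y u t) = 1"
  using assms by (simp add: phat_def sum_cnt3 max_def flip: sum_divide_distrib of_nat_sum)

lemma phat_pos_imp_pos:
  assumes "\<forall>s\<ge>1. 0 < p (xs s) (xs (Suc s)) (us s)" and "0 < phat xs us x y u t"
  shows "0 < p x y u"
proof -
  have "cnt3 xs us x y u t \<noteq> 0"
    using assms(2) by (auto simp: phat_def zero_less_divide_iff)
  then have "{s \<in> {1..<t}. xs s = x \<and> us s = u \<and> xs (Suc s) = y} \<noteq> {}"
    unfolding cnt3_def by (metis card.empty)
  then obtain s where "s \<ge> 1" "xs s = x" "us s = u" "xs (Suc s) = y"
    by auto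
  with assms(1) show ?thesis by auto
qed

section \<open>Kullback--Leibler divergence\<close>

lemma KL_le_chi_square:
  fixes ph q :: "'x::finite \<Rightarrow> real"
  assumes ph_nonneg: "\<And>y. 0 \<le> ph y" and ph_sum: "(\<Sum>y\<in>UNIV. ph y) = 1"
    and q_nonneg: "\<And>y. 0 \<le> q y" and q_sum: "(\<Sum>y\<in>UNIV. q y) = 1"
    and supp: "\<And>y. 0 < ph y \<Longrightarrow> 0 < q y"
  shows "KL ph q \<le> (\<Sum>y\<in>UNIV. if 0 < q y then (ph y - q y)\<^sup>2 / q y else 0)"
proof -
  have pointwise: "ph y * ln (ph y / q y) \<le> (if 0 < q y then (ph y - q y)\<^sup>2 / q y else 0) + (ph y - q y)"
    for y
  proof (cases "0 < ph y")
    case True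
    with supp have "0 < q y" by blast
    have "ph y * ln (ph y / q y) \<le> ph y * (ph y / q y - 1)"
      using True \<open>0 < q y\<close> by (intro mult_left_mono ln_le_minus_one) auto
    also have "\<dots> = (ph y - q y)\<^sup>2 / q y + (ph y - q y)"
      using \<open>0 < q y\<close> by (simp add: field_simps power2_eq_square)
    finally show ?thesis using \<open>0 < q y\<close> by simp
  next
    case False
    with ph_nonneg[of y] q_nonneg[of y] show ?thesis
      by (auto simp: power2_eq_square)
  qed
  have "KL ph q \<le> (\<Sum>y\<in>UNIV. (if 0 < q y then (ph y - q y)\<^sup>2 / q y else 0) + (ph y - q y))"
    unfolding KL_def by (intro sum_mono pointwise)
  also have "\<dots> = (\<Sum>y\<in>UNIV. if 0 < q y then (ph y - q y)\<^sup>2 / q y else 0)"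
    by (simp add: sum.distrib sum_subtractf ph_sum q_sum)
  finally show ?thesis .
qed

lemma KL_ge_neg_card:
  fixes ph q :: "'x::finite \<Rightarrow> real"
  assumes ph_nonneg: "\<And>y. 0 \<le> ph y" and supp: "\<And>y. 0 < ph y \<Longrightarrow> 0 < q y"
    and q_le_one: "\<And>y. q y \<le> 1"
  shows "- real CARD('x) \<le> KL ph q"
proof -
  have pointwise: "-1 \<le> ph y * ln (ph y / q y)" for y
  proof (cases "0 < ph y")
    case True
    with supp have "0 < q y" by blast
    have "ph y * ln (q y / ph y) \<le> ph y * (q y / ph y - 1)"
      using True \<open>0 < q y\<close> by (intro mult_left_mono ln_le_minus_one) auto
    also have "\<dots> = q y - ph y"
      using True by (simp add: field_simps)
    also have "\<dots> \<le> 1"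
      using True q_le_one[of y] by simp
    finally show ?thesis
      using True \<open>0 < q y\<close> by (simp add: ln_div right_diff_distrib)
  next
    case False
    with ph_nonneg[of y] show ?thesis by simp
  qed
  have "(\<Sum>y\<in>(UNIV :: 'x set). -1) \<le> KL ph q"
    unfolding KL_def by (intro sum_mono pointwise)
  then show ?thesis by simp
qed

lemma KL_le_of_dist_le:
  fixes ph q :: "'x::finite \<Rightarrow> real"
  assumes ph_nonneg: "\<And>y. 0 \<le> ph y" and ph_sum: "(\<Sum>y\<in>UNIV. ph y) = 1"
    and q_nonneg: "\<And>y. 0 \<le> q y" and q_sum: "(\<Sum>y\<in>UNIV. q y) = 1"
    and supp: "\<And>y. 0 < ph y \<Longrightarrow> 0 < q y"
    and close: "\<And>y. \<bar>ph y - q y\<bar> \<le> e"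
    and m_pos: "0 < m" and m_le: "\<And>y. 0 < q y \<Longrightarrow> m \<le> q y"
  shows "KL ph q \<le> real CARD('x) ^ 2 * e\<^sup>2 / (2 * m)"
proof (cases "CARD('x) = 1")
  case True
  then obtain y0 :: 'x where "UNIV = {y0}"
    using card_1_singletonE by blast
  have "ph y0 = q y0"
    using ph_sum q_sum unfolding \<open>UNIV = {y0}\<close> by simp
  moreover have "y = y0" for y
    using \<open>UNIV = {y0}\<close> by blast
  ultimately have "ph y = q y" for y
    by (metis (full_types))
  then have "KL ph q = 0"
    by (auto simp: KL_def intro!: sum.neutral)
  with m_pos show ?thesis by simp
next
  case False
  moreover have "0 < CARD('x)"
    by simp
  ultimately have two_le: "2 \<le> real CARD('x)"
    by linarith
  have "KL ph q \<le> (\<Sum>y\<in>UNIV. if 0 < q y then (ph y - q y)\<^sup>2 / q y else 0)"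
    by (rule KL_le_chi_square) (use assms in auto)
  also have "\<dots> \<le> (\<Sum>y\<in>(UNIV :: 'x set). e\<^sup>2 / m)"
  proof (intro sum_mono)
    fix y
    have "(ph y - q y)\<^sup>2 \<le> e\<^sup>2"
      using power_mono[OF close[of y] abs_ge_zero, of 2] by simp
    then show "(if 0 < q y then (ph y - q y)\<^sup>2 / q y else 0) \<le> e\<^sup>2 / m"
      using m_pos m_le[of y] by (auto intro: frac_le)
  qed
  also have "\<dots> = 2 * real CARD('x) * e\<^sup>2 / (2 * m)"
    by simp
  also have "\<dots> \<le> real CARD('x) ^ 2 * e\<^sup>2 / (2 * m)"
    using two_le m_pos by (intro divide_right_mono mult_right_mono) (simp_all add: power2_eq_square)
  finally show ?thesis .
qed

lemma one_le_tau: "1 \<le> k \<Longrightarrow> 1 \<le> tau k"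
  using power_increasing[of 1 k "2::nat"] by (simp add: tau_def)

lemma ln_confidence_level_nonneg:
  assumes "1 \<le> t" and "0 \<le> b"
  shows "0 \<le> ln (real t powr b * real (card (UNIV :: 'x::finite set)) ^ 2
                     * real (card (UNIV :: 'u::finite set)))"
proof -
  have "1 * 1 * 1 \<le> real t powr b * real CARD('x) ^ 2 * real CARD('u)"
    using assms by (intro mult_mono ge_one_powr_ge_zero) (simp_all add: Suc_le_eq)
  then show ?thesis
    by (intro ln_ge_zero) simp
qed

section \<open>The RBMLE index of an optimal policy\<close>

lemma sum_cnt_KL_phat_le:
  fixes p :: "'x::finite \<Rightarrow> 'x \<Rightarrow> 'u::finite \<Rightarrow> real"
  assumes kernel: "is_kernel p" and trans_pos: "\<forall>s\<ge>1. 0 < p (xs s) (xs (Suc s)) (us s)"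
    and c_nonneg: "0 \<le> c"
    and close: "\<And>x y u. 0 < cnt xs us x u t
                  \<Longrightarrow> \<bar>p x y u - phat xs us x y u t\<bar> \<le> sqrt (c / real (cnt xs us x u t))"
  shows "(\<Sum>x\<in>UNIV. \<Sum>u\<in>UNIV. real (cnt xs us x u t) * KL (\<lambda>y. phat xs us x y u t) (\<lambda>y. p x y u))
           \<le> real CARD('x) ^ 3 * real CARD('u) * c / (2 * pmin p)"
proof -
  have pmin: "0 < pmin p"
    using kernel by (rule pmin_pos)
  have pair: "real (cnt xs us x u t) * KL (\<lambda>y. phat xs us x y u t) (\<lambda>y. p x y u)
                \<le> real CARD('x) ^ 2 * c / (2 * pmin p)" for x u
  proof (cases "cnt xs us x u t = 0")
    case True
    with c_nonneg pmin show ?thesis by simp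
  next
    case False
    let ?n = "real (cnt xs us x u t)"
    have "KL (\<lambda>y. phat xs us x y u t) (\<lambda>y. p x y u)
            \<le> real CARD('x) ^ 2 * (sqrt (c / ?n))\<^sup>2 / (2 * pmin p)"
      using kernel False
      by (intro KL_le_of_dist_le)
        (auto simp: is_kernel_def phat_nonneg sum_phat abs_minus_commute close pmin pmin_le
          intro: phat_pos_imp_pos[where p = p and xs = xs and us = us, OF trans_pos])
    also have "\<dots> = real CARD('x) ^ 2 * c / (2 * pmin p) / ?n"
      using c_nonneg by simp
    finally have "?n * KL (\<lambda>y. phat xs us x y u t) (\<lambda>y. p x y u)
                    \<le> ?n * (real CARD('x) ^ 2 * c / (2 * pmin p) / ?n)"
      by (intro mult_left_mono) simp_all
    with False show ?thesis
      by simp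
  qed
  have "(\<Sum>x\<in>UNIV. \<Sum>u\<in>UNIV. real (cnt xs us x u t) * KL (\<lambda>y. phat xs us x y u t) (\<lambda>y. p x y u))
          \<le> (\<Sum>x\<in>(UNIV :: 'x set). \<Sum>u\<in>(UNIV :: 'u set). real CARD('x) ^ 2 * c / (2 * pmin p))"
    by (intro sum_mono pair)
  also have "\<dots> = real CARD('x) ^ 3 * real CARD('u) * c / (2 * pmin p)"
    by (simp add: power2_eq_square power3_eq_cube)
  finally show ?thesis .
qed

definition rb_objective :: "('x::finite \<Rightarrow> 'u::finite \<Rightarrow> real) \<Rightarrow> (nat \<Rightarrow> 'x) \<Rightarrow> (nat \<Rightarrow> 'u)
     \<Rightarrow> real \<Rightarrow> real \<Rightarrow> nat \<Rightarrow> ('x \<Rightarrow> 'u) \<Rightarrow> ('x \<Rightarrow> 'x \<Rightarrow> 'u \<Rightarrow> real) \<Rightarrow> real" where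
  "rb_objective r xs us a b k \<pi> \<theta> =
     alpha a b CARD('x) CARD('u) (tau k) * avg_reward r \<theta> \<pi> (xs 1)
     - (\<Sum>x\<in>UNIV. \<Sum>u\<in>UNIV. real (cnt xs us x u (tau k))
          * KL (\<lambda>y. phat xs us x y u (tau k)) (\<lambda>y. \<theta> x y u))"

lemma rb_index_eq_Sup:
  "rb_index r p xs us a b k \<pi> = Sup {rb_objective r xs us a b k \<pi> \<theta> | \<theta>. \<theta> \<in> Theta p
     \<and> (\<forall>x y u. 0 < phat xs us x y u (tau k) \<longrightarrow> 0 < \<theta> x y u)}"
  by (simp add: rb_index_def rb_objective_def)

lemma rb_objective_le:
  fixes \<theta> :: "'x::finite \<Rightarrow> 'x \<Rightarrow> 'u::finite \<Rightarrow> real"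
  assumes r_bound: "\<And>x u. \<bar>r x u\<bar> \<le> R" and kernel: "is_kernel \<theta>"
    and supp: "\<And>x y u. 0 < phat xs us x y u (tau k) \<Longrightarrow> 0 < \<theta> x y u"
  shows "rb_objective r xs us a b k \<pi> \<theta> \<le> \<bar>alpha a b CARD('x) CARD('u) (tau k)\<bar> * R
           + (\<Sum>x\<in>UNIV. \<Sum>u\<in>UNIV. real (cnt xs us x u (tau k)) * real CARD('x))"
proof -
  let ?\<alpha> = "alpha a b CARD('x) CARD('u) (tau k)"
  have "?\<alpha> * avg_reward r \<theta> \<pi> (xs 1) \<le> \<bar>?\<alpha>\<bar> * \<bar>avg_reward r \<theta> \<pi> (xs 1)\<bar>"
    by (simp flip: abs_mult)
  also have "\<dots> \<le> \<bar>?\<alpha>\<bar> * R"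
    using abs_avg_reward_le[OF kernel r_bound] by (intro mult_left_mono) simp_all
  finally have gain: "?\<alpha> * avg_reward r \<theta> \<pi> (xs 1) \<le> \<bar>?\<alpha>\<bar> * R" .
  have "- real CARD('x) \<le> KL (\<lambda>y. phat xs us x y u (tau k)) (\<lambda>y. \<theta> x y u)" for x u
    by (rule KL_ge_neg_card) (simp_all add: phat_nonneg supp is_kernel_le_one[OF kernel])
  then have "(\<Sum>x\<in>UNIV. \<Sum>u\<in>UNIV. real (cnt xs us x u (tau k)) * - real CARD('x))
      \<le> (\<Sum>x\<in>UNIV. \<Sum>u\<in>UNIV. real (cnt xs us x u (tau k))
           * KL (\<lambda>y. phat xs us x y u (tau k)) (\<lambda>y. \<theta> x y u))"
    by (intro sum_mono mult_left_mono) simp_all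
  with gain show ?thesis
    unfolding rb_objective_def by (simp add: sum_negf)
qed

lemma rb_objective_le_rb_index:
  fixes p \<theta> :: "'x::finite \<Rightarrow> 'x \<Rightarrow> 'u::finite \<Rightarrow> real"
  assumes r_bound: "\<And>x u. \<bar>r x u\<bar> \<le> R" and \<theta>: "\<theta> \<in> Theta p"
    and supp: "\<And>x y u. 0 < phat xs us x y u (tau k) \<Longrightarrow> 0 < \<theta> x y u"
  shows "rb_objective r xs us a b k \<pi> \<theta> \<le> rb_index r p xs us a b k \<pi>"
proof -
  let ?S = "{rb_objective r xs us a b k \<pi> \<theta>' | \<theta>'. \<theta>' \<in> Theta p
              \<and> (\<forall>x y u. 0 < phat xs us x y u (tau k) \<longrightarrow> 0 < \<theta>' x y u)}"
  have "bdd_above ?S"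
  proof (rule bdd_aboveI)
    fix z
    assume "z \<in> ?S"
    then obtain \<theta>' where "z = rb_objective r xs us a b k \<pi> \<theta>'" and "\<theta>' \<in> Theta p"
      and "\<forall>x y u. 0 < phat xs us x y u (tau k) \<longrightarrow> 0 < \<theta>' x y u"
      by blast
    then show "z \<le> \<bar>alpha a b CARD('x) CARD('u) (tau k)\<bar> * R
        + (\<Sum>x\<in>UNIV. \<Sum>u\<in>UNIV. real (cnt xs us x u (tau k)) * real CARD('x))"
      using rb_objective_le[OF r_bound Theta_is_kernel, of \<theta>' p] by auto
  qed
  moreover have "rb_objective r xs us a b k \<pi> \<theta> \<in> ?S"
    using \<theta> supp by blast
  ultimately show ?thesis
    unfolding rb_index_eq_Sup by (rule cSup_upper[rotated])
qed

theorem lemma3: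
  fixes p :: "'x::finite \<Rightarrow> 'x \<Rightarrow> 'u::finite \<Rightarrow> real"
    and r :: "'x \<Rightarrow> 'u \<Rightarrow> real"
    and a b :: real
    and xs :: "nat \<Rightarrow> 'x" and us :: "nat \<Rightarrow> 'u"
  assumes kernel: "is_kernel p"
    and rew: "\<And>x u. 0 < r x u \<and> r x u \<le> 1"
    and a_pos: "a > 0" and b_gt: "b > 2"
    and path: "rbmle_path r p a b xs us"
    and G1: "\<forall>t\<ge>1. p \<in> conf_set b p xs us t"
    and opt: "\<pi>s \<in> opt_policies r p (xs 1)"
    and k: "k \<ge> 1"
  shows "rb_index r p xs us a b k \<pi>s
         \<ge> alpha a b (card (UNIV :: 'x set)) (card (UNIV :: 'u set)) (tau k)
           * (1 - real ((card (UNIV :: 'x set)))^3 * real ((card (UNIV :: 'u set))) / (2 * a * pmin p * opt_gain r p (xs 1)))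
           * opt_gain r p (xs 1)"
proof -
  let ?nX = "card (UNIV :: 'x set)" and ?nU = "card (UNIV :: 'u set)"
  define c where "c = ln (real (tau k) powr b * real ?nX ^ 2 * real ?nU)"
  define J where "J = opt_gain r p (xs 1)"
  have tau_pos: "1 \<le> tau k"
    using k by (rule one_le_tau)
  have c_nonneg: "0 \<le> c"
    unfolding c_def using tau_pos b_gt by (intro ln_confidence_level_nonneg) simp_all
  have trans_pos: "\<forall>s\<ge>1. 0 < p (xs s) (xs (Suc s)) (us s)"
    using path by (simp add: rbmle_path_def)
  have J_eq: "avg_reward r p \<pi>s (xs 1) = J"
    using opt by (simp add: opt_policies_def J_def)
  have "0 < J"
    using avg_reward_pos[OF kernel] rew J_eq by metis
  have "rb_objective r xs us a b k \<pi>s p \<le> rb_index r p xs us a b k \<pi>s"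
  proof (rule rb_objective_le_rb_index)
    show "\<bar>r x u\<bar> \<le> 1" for x u
      using rew[of x u] by auto
  qed (use is_kernel_in_Theta[OF kernel] phat_pos_imp_pos[where p = p, OF trans_pos] in auto)
  moreover have "(\<Sum>x\<in>UNIV. \<Sum>u\<in>UNIV. real (cnt xs us x u (tau k))
               * KL (\<lambda>y. phat xs us x y u (tau k)) (\<lambda>y. p x y u))
        \<le> real ?nX ^ 3 * real ?nU * c / (2 * pmin p)"
    using G1 tau_pos
    by (intro sum_cnt_KL_phat_le[OF kernel trans_pos c_nonneg]) (auto simp: conf_set_def c_def)
  moreover have "alpha a b ?nX ?nU (tau k) * (1 - real ?nX ^ 3 * real ?nU / (2 * a * pmin p * J)) * J
      = alpha a b ?nX ?nU (tau k) * J - real ?nX ^ 3 * real ?nU * c / (2 * pmin p)"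
    using a_pos pmin_pos[OF kernel] \<open>0 < J\<close> by (simp add: alpha_def c_def field_simps)
  ultimately show ?thesis
    unfolding rb_objective_def J_eq J_def by linarith
qed

end
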